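(* For every $n\ge 0$, a permutation $\pi$ of $\{1,\ldots,n\}$ can be produced as the output of a strictly locked jump queue with input $1,2,\ldots,n$ if and only if $\pi$ avoids both patterns $4231$ and $42513$.
   Context: A permutation $\pi=\pi_1\cdots\pi_n$ contains a pattern $\alpha=\alpha_1\cdots\alpha_k$ (a permutation of $\{1,\ldots,k\}$) if there are indices $i_1<\cdots<i_k$ with $\pi_{i_r}<\pi_{i_s}$ iff $\alpha_r<\alpha_s$; otherwise $\pi$ avoids $\alpha$. Jump queues. The input is $1,2,\ldots,n$, and at each step one may either append the next input element to the rear of the queue, or remove (output) some element of the queue; the sequence of outputs forms a permutation of $1,\ldots,n$ once all elements have been output. The front element of the queue may always be output. Outputting an element other than the front element is called a jump, and an element may jump only if it is not locked. When an element $x$ jumps, every element currently in the queue behind $x$ (closer to the rear) becomes locked; this lock is released at the moment when all elements that were in front of $x$ at the time of the jump have been output. An element is locked as long as at least one lock applying to it is in force. (In particular jumping the rear element locks nothing.) - In a strictly locked jump queue, additionally, any element appended to the queue while the queue contains some locked element is itself locked, and is released under the same condition(s) as those locks. *)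

theory Defs
  imports Main
begin

definition contains_pattern :: "nat list \<Rightarrow> nat list \<Rightarrow> bool" where
  "contains_pattern \<pi> \<alpha> \<longleftrightarrow>
     (\<exists>f :: nat \<Rightarrow> nat. strict_mono_on {..<length \<alpha>} f
        \<and> (\<forall>r<length \<alpha>. f r < length \<pi>)
        \<and> (\<forall>r<length \<alpha>. \<forall>s<length \<alpha>.
              (\<pi> ! f r < \<pi> ! f s) \<longleftrightarrow> (\<alpha> ! r < \<alpha> ! s)))"

definition avoids_pattern :: "nat list \<Rightarrow> nat list \<Rightarrow> bool" where
  "avoids_pattern \<pi> \<alpha> \<longleftrightarrow> \<not> contains_pattern \<pi> \<alpha>"

text \<open>Locks are recorded as pairs (y, R): element y is locked until every
element of R has been output (i.e. no element of R is in the queue any more).\<close>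

definition locked :: "nat list \<Rightarrow> (nat \<times> nat set) set \<Rightarrow> nat \<Rightarrow> bool" where
  "locked q L y \<longleftrightarrow> (\<exists>R. (y, R) \<in> L \<and> R \<inter> set q \<noteq> {})"

text \<open>Reachable configurations: remaining input, queue (front first),
output so far, locks.\<close>

inductive sljq_reach :: "nat \<Rightarrow> nat list \<Rightarrow> nat list \<Rightarrow> nat list \<Rightarrow> (nat \<times> nat set) set \<Rightarrow> bool"
  for n :: nat where
  init: "sljq_reach n [1..<Suc n] [] [] {}"
| push: "sljq_reach n (e # inp) q out L \<Longrightarrow>
         sljq_reach n inp (q @ [e]) out
           (L \<union> (if (\<exists>y\<in>set q. locked q L y)
                 then {(e, R) | R. \<exists>y\<in>set q. (y, R) \<in> L \<and> R \<inter> set q \<noteq> {}}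
                 else {}))"
| pop: "sljq_reach n inp (fr @ x # bk) out L \<Longrightarrow>
        (fr = [] \<or> \<not> locked (fr @ x # bk) L x) \<Longrightarrow>
        sljq_reach n inp (fr @ bk) (out @ [x]) (L \<union> {(y, set fr) | y. y \<in> set bk})"

definition sljq_output :: "nat \<Rightarrow> nat list \<Rightarrow> bool" where
  "sljq_output n \<pi> \<longleftrightarrow> (\<exists>L. sljq_reach n [] [] \<pi> L)"

end

theory Submission
  imports Defs
begin

(* When out ! s leaves the queue, the elements waiting in front of it are exactly the smaller
   elements not yet output (its release set); if there are any, out ! s jumped and locked everything
   behind it. If moreover some z with out ! s < z < out ! r for an earlier r is still waiting, then z
   is behind out ! s and keeps that lock in force until the release set is gone, and strict locking
   passes the lock on to every element appended meanwhile. Hence no element larger than out ! s can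
   be output while part of its release set is waiting. Conversely, the lazy strategy, which appends
   elements only until the next output is in the queue, creates no other locks in force, so this
   condition characterises the outputs. A violation consists of positions r < s < t with
   out ! s < out ! t, a later z between out ! s and out ! r, and an element below out ! s after t;
   comparing out ! t with out ! r and the positions of z and that element yields 4231 or 42513. *)

abbreviation pending :: "nat list \<Rightarrow> nat \<Rightarrow> nat list" where
  "pending out k \<equiv> filter (\<lambda>v. v \<notin> set out) [1..<Suc k]"

abbreviation push_locks ::
  "nat list \<Rightarrow> (nat \<times> nat set) set \<Rightarrow> nat \<Rightarrow> (nat \<times> nat set) set" where
  "push_locks q L e \<equiv> L \<union> (if \<exists>y\<in>set q. locked q L y
     then {(e, R) | R. \<exists>y\<in>set q. (y, R) \<in> L \<and> R \<inter> set q \<noteq> {}} else {})"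

abbreviation pop_locks ::
  "nat list \<Rightarrow> nat list \<Rightarrow> (nat \<times> nat set) set \<Rightarrow> (nat \<times> nat set) set" where
  "pop_locks fr bk L \<equiv> L \<union> {(y, set fr) | y. y \<in> set bk}"

lemma sorted_pending: "sorted_wrt (<) (pending out k)"
  by (intro sorted_wrt_filter) (simp del: upt_Suc add: sorted_wrt_upt)

lemma mem_pending: "v \<in> set (pending out k) \<longleftrightarrow> 0 < v \<and> v \<le> k \<and> v \<notin> set out"
  by auto

lemma pending_split_less:
  assumes "pending out k = fr @ x # bk"
  shows "\<forall>v\<in>set fr. v < x" and "\<forall>v\<in>set bk. x < v"
  using sorted_pending[of out k] unfolding assms by (auto simp: sorted_wrt_append)

lemma pending_remove:
  assumes "pending out k = fr @ x # bk"
  shows "pending (out @ [x]) k = fr @ bk"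
proof -
  have "pending (out @ [x]) k = removeAll x (pending out k)"
    unfolding removeAll_filter_not_eq filter_filter by (rule filter_cong) auto
  moreover have "x \<notin> set fr" "x \<notin> set bk" using pending_split_less[OF assms] by auto
  ultimately show ?thesis unfolding assms by simp
qed

lemma sljq_reach_shape:
  "sljq_reach n inp q out L \<Longrightarrow> \<exists>k\<le>n. inp = [Suc k..<Suc n] \<and> q = pending out k
     \<and> distinct out \<and> set out \<subseteq> {1..k}"
proof (induction rule: sljq_reach.induct)
  case init
  then show ?case by auto
next
  case (push e inp q out L)
  then obtain k where k: "k \<le> n" "e # inp = [Suc k..<Suc n]" "q = pending out k"
    "distinct out" "set out \<subseteq> {1..k}" by blast
  then have "e = Suc k" "Suc k \<le> n" "inp = [Suc (Suc k)..<Suc n]"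
    using upt_eq_Cons_conv[of "Suc k" "Suc n" e inp] by auto
  moreover have "Suc k \<notin> set out" using k(5) by auto
  ultimately show ?case using k by (intro exI[of _ "Suc k"]) auto
next
  case (pop inp fr x bk out L)
  then obtain k where k: "k \<le> n" "inp = [Suc k..<Suc n]" "pending out k = fr @ x # bk"
    "distinct out" "set out \<subseteq> {1..k}" by metis
  have "x \<in> set (pending out k)" unfolding k(3) by simp
  then show ?case using k pending_remove[OF k(3)] by (intro exI[of _ k]) auto
qed


(* As the queue is increasing, these are the elements in front of out ! s when it is output. *)
definition release_set :: "nat list \<Rightarrow> nat \<Rightarrow> nat set" where
  "release_set out s = {v. 0 < v \<and> v < out ! s \<and> v \<notin> set (take s out)}"

(* Then z is in the queue behind out ! s when out ! s is output: the earlier output of the larger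
   out ! r forced z in, and z leaves later. *)
definition forced_behind :: "nat list \<Rightarrow> nat \<Rightarrow> nat \<Rightarrow> bool" where
  "forced_behind out s z \<longleftrightarrow>
     (\<exists>r<s. out ! s < z \<and> z < out ! r) \<and> z \<notin> set (take (Suc s) out)"

(* A violation: out ! t leaves while the lock created by out ! s, kept in force by z, applies. *)
definition lock_consistent :: "nat list \<Rightarrow> bool" where
  "lock_consistent out \<longleftrightarrow> \<not> (\<exists>s t z a. s < t \<and> t < length out \<and> forced_behind out s z
     \<and> out ! s < out ! t \<and> a \<in> release_set out s \<and> a \<notin> set (take (Suc t) out))"

lemma release_set_append: "s < length xs \<Longrightarrow> release_set (xs @ ys) s = release_set xs s"
  by (simp add: release_set_def nth_append)

lemma forced_behind_append:
  "s < length xs \<Longrightarrow> forced_behind (xs @ ys) s z \<longleftrightarrow> forced_behind xs s z"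
proof -
  assume s: "s < length xs"
  then have "(xs @ ys) ! r = xs ! r" if "r \<le> s" for r
    using that by (simp add: nth_append)
  moreover have "take (Suc s) (xs @ ys) = take (Suc s) xs" using s by simp
  ultimately show ?thesis unfolding forced_behind_def by (metis less_imp_le order_refl)
qed

lemma release_set_front:
  assumes q: "pending out k = fr @ x # bk"
  shows "release_set (out @ [x]) (length out) = set fr"
proof -
  have in_q: "v \<in> set (fr @ x # bk) \<longleftrightarrow> 0 < v \<and> v \<le> k \<and> v \<notin> set out" for v
    unfolding q[symmetric] by auto
  have x: "x \<le> k" using in_q[of x] by simp
  have "v \<in> set fr \<longleftrightarrow> 0 < v \<and> v < x \<and> v \<notin> set out" for v
  proof
    assume "v \<in> set fr"
    then show "0 < v \<and> v < x \<and> v \<notin> set out"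
      using pending_split_less(1)[OF q] in_q[of v] by auto
  next
    assume v: "0 < v \<and> v < x \<and> v \<notin> set out"
    then have "v \<in> set (fr @ x # bk)" using in_q[of v] x by auto
    then show "v \<in> set fr" using v pending_split_less(2)[OF q] by auto
  qed
  then show ?thesis by (auto simp: release_set_def)
qed

definition locks_forced :: "nat list \<Rightarrow> nat list \<Rightarrow> (nat \<times> nat set) set \<Rightarrow> bool" where
  "locks_forced out q L \<longleftrightarrow> (\<forall>s z. s < length out \<longrightarrow> forced_behind out s z \<longrightarrow>
     release_set out s \<inter> set q \<noteq> {} \<longrightarrow>
     z \<in> set q \<and> (\<forall>y\<in>set q. out ! s < y \<longrightarrow> (y, release_set out s) \<in> L))"

lemma forced_lock_blocks_pop:
  assumes forced: "locks_forced out (fr @ x # bk) L" and q: "pending out k = fr @ x # bk"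
    and s: "s < length out" "forced_behind out s z" "out ! s < x"
    and a: "a \<in> release_set out s" "a \<in> set (fr @ x # bk)"
  shows "fr \<noteq> [] \<and> locked (fr @ x # bk) L x"
proof -
  have "(x, release_set out s) \<in> L"
    using forced s a unfolding locks_forced_def by auto
  then have "locked (fr @ x # bk) L x" using a unfolding locked_def by blast
  moreover have "a < x" using a(1) s(3) unfolding release_set_def by auto
  then have "a \<in> set fr" using a(2) pending_split_less(2)[OF q] by auto
  ultimately show ?thesis by auto
qed

lemma locks_forced_push:
  assumes forced: "locks_forced out q L" and e: "\<forall>v\<in>set out. v < e"
  shows "locks_forced out (q @ [e]) (push_locks q L e)"
  unfolding locks_forced_def
proof (intro allI impI)
  fix s z
  assume s: "s < length out" "forced_behind out s z"
    and waiting: "release_set out s \<inter> set (q @ [e]) \<noteq> {}"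
  have "e \<notin> release_set out s" using e nth_mem[OF s(1)] unfolding release_set_def by auto
  then have waiting_q: "release_set out s \<inter> set q \<noteq> {}" using waiting by auto
  then have z: "z \<in> set q" "(z, release_set out s) \<in> L"
    and old: "\<forall>y\<in>set q. out ! s < y \<longrightarrow> (y, release_set out s) \<in> L"
    using forced s unfolding locks_forced_def forced_behind_def by blast+
  then have "locked q L z" using waiting_q unfolding locked_def by blast
  then have "(e, release_set out s) \<in> push_locks q L e" using z waiting_q by auto
  then show "z \<in> set (q @ [e]) \<and>
    (\<forall>y\<in>set (q @ [e]). out ! s < y \<longrightarrow> (y, release_set out s) \<in> push_locks q L e)"
    using z old by auto
qed

lemma lock_consistent_pop:
  assumes consistent: "lock_consistent out" and forced: "locks_forced out (fr @ x # bk) L"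
    and q: "pending out k = fr @ x # bk" and legal: "fr = [] \<or> \<not> locked (fr @ x # bk) L x"
  shows "lock_consistent (out @ [x])"
proof -
  have False if h: "s < t" "t < length (out @ [x])" "forced_behind (out @ [x]) s z"
    "(out @ [x]) ! s < (out @ [x]) ! t" "a \<in> release_set (out @ [x]) s"
    "a \<notin> set (take (Suc t) (out @ [x]))" for s t z a
  proof -
    have s: "s < length out" using h(1,2) by simp
    then have fb: "forced_behind out s z" and rs: "a \<in> release_set out s"
      and out_s: "(out @ [x]) ! s = out ! s"
      using h(3,5) forced_behind_append release_set_append by (auto simp: nth_append)
    show False
    proof (cases "t < length out")
      case True
      then have "out ! s < out ! t" "a \<notin> set (take (Suc t) out)"
        using h(4,6) out_s by (simp_all add: nth_append)
      then show False using consistent h(1) True fb rs unfolding lock_consistent_def by blast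
    next
      case False
      then have "t = length out" using h(2) by simp
      then have t: "(out @ [x]) ! t = x" "a \<notin> set out" "a \<noteq> x" using h(6) by auto
      have "x \<in> set (pending out k)" unfolding q by simp
      then have "a \<in> set (pending out k)"
        using rs t h(4) out_s unfolding mem_pending release_set_def by auto
      then have "a \<in> set (fr @ x # bk)" unfolding q .
      then show False
        using forced_lock_blocks_pop[OF forced q s fb _ rs] legal h(4) t(1) out_s by auto
    qed
  qed
  then show ?thesis unfolding lock_consistent_def by blast
qed

lemma locks_forced_pop:
  assumes forced: "locks_forced out (fr @ x # bk) L" and q: "pending out k = fr @ x # bk"
    and legal: "fr = [] \<or> \<not> locked (fr @ x # bk) L x" and out: "set out \<subseteq> {1..k}"
  shows "locks_forced (out @ [x]) (fr @ bk) (pop_locks fr bk L)"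
  unfolding locks_forced_def
proof (intro allI impI)
  fix s z
  assume s: "s < length (out @ [x])" and fb: "forced_behind (out @ [x]) s z"
    and waiting: "release_set (out @ [x]) s \<inter> set (fr @ bk) \<noteq> {}"
  show "z \<in> set (fr @ bk) \<and>
    (\<forall>y\<in>set (fr @ bk). (out @ [x]) ! s < y \<longrightarrow> (y, release_set (out @ [x]) s) \<in> pop_locks fr bk L)"
  proof (cases "s < length out")
    case True
    then have fb': "forced_behind out s z" and out_s: "(out @ [x]) ! s = out ! s"
      and rs: "release_set (out @ [x]) s = release_set out s"
      using fb forced_behind_append release_set_append by (auto simp: nth_append)
    then obtain a where a: "a \<in> release_set out s" "a \<in> set (fr @ x # bk)"
      using waiting by auto
    then have z: "z \<in> set (fr @ x # bk)"
      and locks: "\<forall>y\<in>set (fr @ x # bk). out ! s < y \<longrightarrow> (y, release_set out s) \<in> L"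
      using forced True fb' unfolding locks_forced_def by blast+
    have "out ! s < z" using fb' unfolding forced_behind_def by blast
    then have "z \<noteq> x" using forced_lock_blocks_pop[OF forced q True fb' _ a] legal by auto
    then show ?thesis using z locks out_s rs by auto
  next
    case False
    then have s: "s = length out" using s by simp
    then have out_s: "(out @ [x]) ! s = x" by simp
    obtain r where r: "r < s" "x < z" "z < (out @ [x]) ! r" "z \<notin> set (out @ [x])"
      using fb out_s s unfolding forced_behind_def by auto
    then have "z < out ! r" "out ! r \<in> set out" using s by (simp_all add: nth_append)
    then have "z \<in> set (pending out k)" using r out unfolding mem_pending by auto
    then have "z \<in> set bk" using r(2,4) pending_split_less(1)[OF q] unfolding q by auto
    moreover have "\<forall>y\<in>set (fr @ bk). x < y \<longrightarrow> y \<in> set bk"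
      using pending_split_less(1)[OF q] by auto
    ultimately show ?thesis using release_set_front[OF q] s out_s by auto
  qed
qed

lemma sljq_reach_locks_forced:
  "sljq_reach n inp q out L \<Longrightarrow> locks_forced out q L \<and> lock_consistent out"
proof (induction rule: sljq_reach.induct)
  case init
  then show ?case by (simp add: locks_forced_def lock_consistent_def)
next
  case (push e inp q out L)
  from sljq_reach_shape[OF push.hyps] obtain k
    where "e # inp = [Suc k..<Suc n]" "set out \<subseteq> {1..k}" by blast
  then have "\<forall>v\<in>set out. v < e" using upt_eq_Cons_conv[of "Suc k" "Suc n" e inp] by auto
  then show ?case using push.IH locks_forced_push by simp
next
  case (pop inp fr x bk out L)
  from sljq_reach_shape[OF pop.hyps(1)] obtain k
    where q: "pending out k = fr @ x # bk" and out: "set out \<subseteq> {1..k}" by metis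
  from pop.IH have "locks_forced out (fr @ x # bk) L" "lock_consistent out" by auto
  then show ?case
    using lock_consistent_pop[OF _ _ q pop.hyps(2)] locks_forced_pop[OF _ q pop.hyps(2) out]
    by blast
qed

lemma sljq_output_lock_consistent: "sljq_output n \<pi> \<Longrightarrow> lock_consistent \<pi>"
  unfolding sljq_output_def using sljq_reach_locks_forced by blast

definition locks_justified :: "nat list \<Rightarrow> nat list \<Rightarrow> (nat \<times> nat set) set \<Rightarrow> bool" where
  "locks_justified out q L \<longleftrightarrow> (\<forall>y R. (y, R) \<in> L \<longrightarrow> R \<inter> set q \<noteq> {} \<longrightarrow>
     (\<exists>s<length out. (\<exists>z. forced_behind out s z) \<and> R = release_set out s \<and> out ! s < y))"

(* Needed because push copies release sets: appending k + 1 must not put an old lock in force. *)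
definition locks_below :: "nat \<Rightarrow> (nat \<times> nat set) set \<Rightarrow> bool" where
  "locks_below k L \<longleftrightarrow> (\<forall>y R. (y, R) \<in> L \<longrightarrow> R \<subseteq> {..k})"

lemma locks_justified_push:
  assumes justified: "locks_justified out q L" and below: "locks_below m L"
    and q: "\<forall>v\<in>set q. v \<le> m" and e: "m < e"
  shows "locks_justified out (q @ [e]) (push_locks q L e)"
  unfolding locks_justified_def
proof (intro allI impI)
  fix y R
  assume lock: "(y, R) \<in> push_locks q L e" and waiting: "R \<inter> set (q @ [e]) \<noteq> {}"
  show "\<exists>s<length out. (\<exists>z. forced_behind out s z) \<and> R = release_set out s \<and> out ! s < y"
  proof (cases "(y, R) \<in> L")
    case True
    then have "e \<notin> R" using below e unfolding locks_below_def by fastforce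
    then have "R \<inter> set q \<noteq> {}" using waiting by auto
    then show ?thesis using justified True unfolding locks_justified_def by blast
  next
    case False
    then obtain y' where y': "y = e" "y' \<in> set q" "(y', R) \<in> L" "R \<inter> set q \<noteq> {}"
      using lock by (auto split: if_splits)
    then obtain s where "s < length out" "\<exists>z. forced_behind out s z" "R = release_set out s"
      "out ! s < y'"
      using justified unfolding locks_justified_def by blast
    moreover have "y' < y" using y' q e by fastforce
    ultimately show ?thesis by (intro exI[of _ s]) auto
  qed
qed

lemma locks_below_push:
  "locks_below m L \<Longrightarrow> m \<le> m' \<Longrightarrow> locks_below m' (push_locks q L e)"
  unfolding locks_below_def by (fastforce split: if_splits)

(* Runs of the lazy strategy after appending exactly 1, ..., k. *)
definition lazy_reach :: "nat \<Rightarrow> nat \<Rightarrow> nat list \<Rightarrow> (nat \<times> nat set) set \<Rightarrow> bool" where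
  "lazy_reach n k out L \<longleftrightarrow> sljq_reach n [Suc k..<Suc n] (pending out k) out L
     \<and> locks_justified out (pending out k) L \<and> locks_below k L"

lemma lazy_reach_Suc:
  assumes reach: "lazy_reach n m out L" and out: "set out \<subseteq> {1..m}" and "m < n"
  shows "lazy_reach n (Suc m) out (push_locks (pending out m) L (Suc m))"
proof -
  have upt: "[Suc m..<Suc n] = Suc m # [Suc (Suc m)..<Suc n]"
    using \<open>m < n\<close> upt_conv_Cons by simp
  have "sljq_reach n [Suc m..<Suc n] (pending out m) out L"
    using reach unfolding lazy_reach_def by blast
  from sljq_reach.push[OF this[unfolded upt]]
  have "sljq_reach n [Suc (Suc m)..<Suc n] (pending out m @ [Suc m]) out
      (push_locks (pending out m) L (Suc m))" .
  moreover have "locks_justified out (pending out m @ [Suc m]) (push_locks (pending out m) L (Suc m))"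
    using reach unfolding lazy_reach_def by (intro locks_justified_push) auto
  moreover have "locks_below (Suc m) (push_locks (pending out m) L (Suc m))"
    using reach unfolding lazy_reach_def by (intro locks_below_push) auto
  moreover have "pending out (Suc m) = pending out m @ [Suc m]" using out by auto
  ultimately show ?thesis unfolding lazy_reach_def by argo
qed

lemma lazy_reach_push_upto:
  assumes "lazy_reach n k out L" "set out \<subseteq> {1..k}" "k \<le> m" "m \<le> n"
  shows "\<exists>L'. lazy_reach n m out L'"
  using assms(3,4)
proof (induction m rule: dec_induct)
  case base
  then show ?case using assms(1) by blast
next
  case (step m)
  then obtain L' where "lazy_reach n m out L'" by auto
  moreover have "set out \<subseteq> {1..m}" using assms(2) \<open>k \<le> m\<close> by auto
  moreover have "m < n" using \<open>Suc m \<le> n\<close> by simp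
  ultimately show ?case using lazy_reach_Suc by blast
qed

definition max_output :: "nat list \<Rightarrow> nat" where
  "max_output xs = Max (insert 0 (set xs))"

lemma max_output_snoc: "max_output (xs @ [x]) = max (max_output xs) x"
proof -
  have "insert 0 (set (xs @ [x])) = insert x (insert 0 (set xs))" by auto
  then show ?thesis
    unfolding max_output_def max.commute[of _ x] by (simp only:) (rule Max_insert, simp_all)
qed

lemma le_max_output: "v \<in> set xs \<Longrightarrow> v \<le> max_output xs"
  by (simp add: max_output_def)

lemma max_output_in: "max_output xs = 0 \<or> max_output xs \<in> set xs"
  using Max_in[of "insert 0 (set xs)"] by (auto simp: max_output_def)

lemma lock_consistent_not_locked:
  assumes consistent: "lock_consistent \<pi>" and t: "t < length \<pi>"
    and justified: "locks_justified (take t \<pi>) (pending (take t \<pi>) m) L"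
  shows "\<not> locked (pending (take t \<pi>) m) L (\<pi> ! t)"
proof
  let ?out = "take t \<pi>"
  assume "locked (pending ?out m) L (\<pi> ! t)"
  then obtain R where R: "(\<pi> ! t, R) \<in> L" "R \<inter> set (pending ?out m) \<noteq> {}"
    unfolding locked_def by blast
  then obtain a where a: "a \<in> R" "a \<in> set (pending ?out m)" by blast
  from R justified obtain s z where "s < length ?out" "forced_behind ?out s z"
    "R = release_set ?out s" "?out ! s < \<pi> ! t"
    unfolding locks_justified_def by blast
  with a(1) t have s: "s < t" "forced_behind ?out s z" "a \<in> release_set ?out s"
    "?out ! s < \<pi> ! t" by simp_all
  have "s < length ?out" using s(1) t by simp
  from forced_behind_append[OF this, of "drop t \<pi>"] release_set_append[OF this, of "drop t \<pi>"]
  have "forced_behind \<pi> s z" "a \<in> release_set \<pi> s" "\<pi> ! s < \<pi> ! t"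
    using s by simp_all
  moreover have "a \<notin> set (take (Suc t) \<pi>)"
  proof -
    have "a < \<pi> ! t" using \<open>a \<in> release_set \<pi> s\<close> \<open>\<pi> ! s < \<pi> ! t\<close>
      unfolding release_set_def by simp
    moreover have "a \<notin> set ?out" using a(2) by simp
    ultimately show ?thesis using t by (auto simp: take_Suc_conv_app_nth)
  qed
  ultimately show False using consistent s(1) t unfolding lock_consistent_def by blast
qed

lemma locks_justified_pop:
  assumes justified: "locks_justified out (fr @ x # bk) L" and q: "pending out m = fr @ x # bk"
    and m: "m \<le> max (max_output out) x"
  shows "locks_justified (out @ [x]) (fr @ bk) (pop_locks fr bk L)"
  unfolding locks_justified_def
proof (intro allI impI)
  fix y R
  assume lock: "(y, R) \<in> pop_locks fr bk L" and waiting: "R \<inter> set (fr @ bk) \<noteq> {}"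
  show "\<exists>s<length (out @ [x]). (\<exists>z. forced_behind (out @ [x]) s z)
    \<and> R = release_set (out @ [x]) s \<and> (out @ [x]) ! s < y"
  proof (cases "(y, R) \<in> L")
    case True
    then have "R \<inter> set (fr @ x # bk) \<noteq> {}" using waiting by auto
    then obtain s where "s < length out" "\<exists>z. forced_behind out s z" "R = release_set out s"
      "out ! s < y"
      using justified True unfolding locks_justified_def by blast
    then show ?thesis
      using forced_behind_append release_set_append by (intro exI[of _ s]) (auto simp: nth_append)
  next
    case False
    then have y: "y \<in> set bk" "R = set fr" using lock by auto
    then have "x < y" using pending_split_less(2)[OF q] by auto
    have "y \<in> set (pending out m)" using y unfolding q by simp
    then have "y \<le> max_output out" "y \<notin> set out"
      using m \<open>x < y\<close> unfolding mem_pending by auto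
    then have "max_output out \<in> set out" "y < max_output out"
      using max_output_in[of out] \<open>x < y\<close> by (auto simp: le_less)
    then obtain r where r: "r < length out" "y < out ! r" by (metis in_set_conv_nth)
    have "forced_behind (out @ [x]) (length out) y"
      unfolding forced_behind_def using r \<open>x < y\<close> \<open>y \<notin> set out\<close>
      by (auto simp: nth_append)
    then show ?thesis
      using y release_set_front[OF q] \<open>x < y\<close> by (intro exI[of _ "length out"]) auto
  qed
qed

lemma lazy_reach_pop:
  assumes consistent: "lock_consistent \<pi>" and "distinct \<pi>" and \<pi>: "set \<pi> = {1..n}"
    and t: "t < length \<pi>" and m: "m = max (max_output (take t \<pi>)) (\<pi> ! t)"
    and reach: "lazy_reach n m (take t \<pi>) L"
  shows "\<exists>L'. lazy_reach n m (take (Suc t) \<pi>) L'"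
proof -
  define out where "out = take t \<pi>"
  define x where "x = \<pi> ! t"
  have take_Suc: "take (Suc t) \<pi> = out @ [x]"
    using t by (simp add: out_def x_def take_Suc_conv_app_nth)
  then have "distinct (out @ [x])" using \<open>distinct \<pi>\<close> by (metis distinct_take)
  then have "x \<notin> set out" by simp
  moreover have "x \<in> set \<pi>" using t unfolding x_def by simp
  then have "0 < x" using \<pi> by auto
  ultimately have "x \<in> set (pending out m)" using m unfolding out_def x_def mem_pending by simp
  then obtain fr bk where q: "pending out m = fr @ x # bk" by (meson split_list)
  have reach': "sljq_reach n [Suc m..<Suc n] (fr @ x # bk) out L"
    and justified: "locks_justified out (fr @ x # bk) L" and below: "locks_below m L"
    using reach unfolding lazy_reach_def out_def[symmetric] q by auto
  have "\<not> locked (fr @ x # bk) L x"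
    using lock_consistent_not_locked[OF consistent t] reach q
    unfolding lazy_reach_def out_def x_def by metis
  then have "sljq_reach n [Suc m..<Suc n] (fr @ bk) (out @ [x]) (pop_locks fr bk L)"
    using sljq_reach.pop[OF reach'] by blast
  moreover have "locks_justified (out @ [x]) (fr @ bk) (pop_locks fr bk L)"
    using locks_justified_pop[OF justified q] m unfolding out_def x_def by simp
  moreover have "locks_below m (pop_locks fr bk L)"
  proof -
    have "set fr \<subseteq> set (pending out m)" unfolding q by auto
    then show ?thesis using below unfolding locks_below_def by auto
  qed
  ultimately show ?thesis
    unfolding lazy_reach_def take_Suc pending_remove[OF q] by blast
qed

lemma lazy_reach_prefix:
  assumes consistent: "lock_consistent \<pi>" and "distinct \<pi>" and \<pi>: "set \<pi> = {1..n}"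
  shows "t \<le> length \<pi> \<Longrightarrow> \<exists>L. lazy_reach n (max_output (take t \<pi>)) (take t \<pi>) L"
proof (induction t)
  case 0
  have "lazy_reach n 0 [] {}"
    using sljq_reach.init by (simp add: lazy_reach_def locks_justified_def locks_below_def)
  then show ?case by (auto simp: max_output_def)
next
  case (Suc t)
  then have t: "t < length \<pi>" by simp
  let ?out = "take t \<pi>"
  define m where "m = max (max_output ?out) (\<pi> ! t)"
  obtain L where L: "lazy_reach n (max_output ?out) ?out L" using Suc t by auto
  have out: "set ?out \<subseteq> {1..n}" using \<pi> set_take_subset by metis
  then have "set ?out \<subseteq> {1..max_output ?out}" using le_max_output by fastforce
  moreover have "m \<le> n"
    using out max_output_in[of ?out] nth_mem[OF t] \<pi> unfolding m_def by auto
  ultimately obtain L' where "lazy_reach n m ?out L'"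
    using lazy_reach_push_upto[OF L] unfolding m_def by fastforce
  then obtain L'' where "lazy_reach n m (take (Suc t) \<pi>) L''"
    using lazy_reach_pop[OF assms t m_def] by blast
  moreover have "max_output (take (Suc t) \<pi>) = m"
    using t by (simp add: take_Suc_conv_app_nth max_output_snoc m_def)
  ultimately show ?case by auto
qed

lemma lock_consistent_imp_sljq_output:
  assumes "lock_consistent \<pi>" and "distinct \<pi>" and \<pi>: "set \<pi> = {1..n}"
  shows "sljq_output n \<pi>"
proof -
  have "\<exists>L. lazy_reach n (max_output \<pi>) \<pi> L"
    using lazy_reach_prefix[OF assms, of "length \<pi>"] by simp
  then obtain L where L: "lazy_reach n (max_output \<pi>) \<pi> L" ..
  have "max_output \<pi> = n"
  proof (cases "n = 0")
    case True
    then show ?thesis using \<pi> by (simp add: max_output_def)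
  next
    case False
    then have "n \<le> max_output \<pi>" using \<pi> le_max_output[of n \<pi>] by simp
    moreover have "max_output \<pi> \<le> n" using max_output_in[of \<pi>] \<pi> by auto
    ultimately show ?thesis by simp
  qed
  moreover have "pending \<pi> n = []"
    using \<pi> by (simp del: upt_Suc add: filter_empty_conv atLeastLessThanSuc_atLeastAtMost)
  ultimately show ?thesis using L unfolding sljq_output_def lazy_reach_def by auto
qed

lemma contains_4231I:
  assumes "i < j" "j < k" "k < l" "l < length p" "p ! l < p ! j" "p ! j < p ! k" "p ! k < p ! i"
  shows "contains_pattern p [4,2,3,1]"
  unfolding contains_pattern_def strict_mono_on_def
  using assms by (intro exI[of _ "\<lambda>r. [i,j,k,l] ! r"]) (auto simp: less_Suc_eq)

lemma contains_4231E:
  assumes "contains_pattern p [4,2,3,1]"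
  obtains i j k l where "i < j" "j < k" "k < l" "l < length p"
    "p ! l < p ! j" "p ! j < p ! k" "p ! k < p ! i"
proof -
  obtain f where f: "strict_mono_on {..<length [4,2,3,1::nat]} f"
    "\<forall>r<length [4,2,3,1::nat]. f r < length p"
    "\<forall>r<length [4,2,3,1::nat]. \<forall>s<length [4,2,3,1::nat].
       p ! f r < p ! f s \<longleftrightarrow> [4,2,3,1::nat] ! r < [4,2,3,1] ! s"
    using assms unfolding contains_pattern_def by blast
  have "f 0 < f 1" "f 1 < f 2" "f 2 < f 3" using f(1) unfolding strict_mono_on_def by auto
  moreover have "f 3 < length p" using f(2) by simp
  moreover have "p ! f 3 < p ! f 1" "p ! f 1 < p ! f 2" "p ! f 2 < p ! f 0"
    using f(3)[rule_format, of 3 1] f(3)[rule_format, of 1 2] f(3)[rule_format, of 2 0] by simp_all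
  ultimately show ?thesis using that by blast
qed

lemma contains_42513I:
  assumes "i < j" "j < k" "k < l" "l < m" "m < length p"
    "p ! l < p ! j" "p ! j < p ! m" "p ! m < p ! i" "p ! i < p ! k"
  shows "contains_pattern p [4,2,5,1,3]"
  unfolding contains_pattern_def strict_mono_on_def
  using assms by (intro exI[of _ "\<lambda>r. [i,j,k,l,m] ! r"]) (auto simp: less_Suc_eq)

lemma contains_42513E:
  assumes "contains_pattern p [4,2,5,1,3]"
  obtains i j k l m where "i < j" "j < k" "k < l" "l < m" "m < length p"
    "p ! l < p ! j" "p ! j < p ! m" "p ! m < p ! i" "p ! i < p ! k"
proof -
  obtain f where f: "strict_mono_on {..<length [4,2,5,1,3::nat]} f"
    "\<forall>r<length [4,2,5,1,3::nat]. f r < length p"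
    "\<forall>r<length [4,2,5,1,3::nat]. \<forall>s<length [4,2,5,1,3::nat].
       p ! f r < p ! f s \<longleftrightarrow> [4,2,5,1,3::nat] ! r < [4,2,5,1,3] ! s"
    using assms unfolding contains_pattern_def by blast
  have "f 0 < f 1" "f 1 < f 2" "f 2 < f 3" "f 3 < f 4"
    using f(1) unfolding strict_mono_on_def by auto
  moreover have "f 4 < length p" using f(2) by simp
  moreover have "p ! f 3 < p ! f 1" "p ! f 1 < p ! f 4" "p ! f 4 < p ! f 0" "p ! f 0 < p ! f 2"
    using f(3)[rule_format, of 3 1] f(3)[rule_format, of 1 4] f(3)[rule_format, of 4 0]
      f(3)[rule_format, of 0 2] by simp_all
  ultimately show ?thesis using that by blast
qed

lemma distinct_nth_notin_take:
  assumes "distinct xs" and "i \<le> j" and "j < length xs"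
  shows "xs ! j \<notin> set (take i xs)"
proof -
  have "xs ! j \<in> set (drop i xs)"
    using assms(2,3) nth_mem[of "j - i" "drop i xs"] by simp
  then show ?thesis using set_take_disj_set_drop_if_distinct[OF assms(1) order_refl] by blast
qed

lemma nth_notin_take_imp_le:
  assumes "i < length xs" and "xs ! i \<notin> set (take k xs)"
  shows "k \<le> i"
proof (rule ccontr)
  assume "\<not> k \<le> i"
  then have "xs ! i \<in> set (take k xs)"
    using assms(1) nth_mem[of i "take k xs"] by simp
  then show False using assms(2) by blast
qed

(* Positional form of a violation of lock_consistent: c and u are the positions of z and a. *)
definition lock_obstruction :: "nat list \<Rightarrow> bool" where
  "lock_obstruction \<pi> \<longleftrightarrow> (\<exists>r s t c u. r < s \<and> s < t \<and> s < c \<and> t < u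
     \<and> c < length \<pi> \<and> u < length \<pi>
     \<and> \<pi> ! u < \<pi> ! s \<and> \<pi> ! s < \<pi> ! c \<and> \<pi> ! c < \<pi> ! r \<and> \<pi> ! s < \<pi> ! t)"

lemma lock_obstructionI:
  assumes "r < s" "s < t" "s < c" "t < u" "c < length \<pi>" "u < length \<pi>"
    "\<pi> ! u < \<pi> ! s" "\<pi> ! s < \<pi> ! c" "\<pi> ! c < \<pi> ! r" "\<pi> ! s < \<pi> ! t"
  shows "lock_obstruction \<pi>"
  using assms unfolding lock_obstruction_def by blast

lemma not_lock_consistent_iff_obstruction:
  assumes "distinct \<pi>" and \<pi>: "set \<pi> = {1..n}"
  shows "\<not> lock_consistent \<pi> \<longleftrightarrow> lock_obstruction \<pi>"
proof
  assume "\<not> lock_consistent \<pi>"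
  then obtain s t z a where st: "s < t" "t < length \<pi>" "\<pi> ! s < \<pi> ! t"
    and z: "forced_behind \<pi> s z" and a: "a \<in> release_set \<pi> s" "a \<notin> set (take (Suc t) \<pi>)"
    unfolding lock_consistent_def by blast
  obtain r where r: "r < s" "\<pi> ! s < z" "z < \<pi> ! r" and z_late: "z \<notin> set (take (Suc s) \<pi>)"
    using z unfolding forced_behind_def by blast
  have "\<pi> ! r \<in> set \<pi>" using r(1) st(1,2) by simp
  then have "z \<in> set \<pi>" using \<pi> r(2,3) by auto
  then obtain c where c: "c < length \<pi>" "\<pi> ! c = z" by (metis in_set_conv_nth)
  have "\<pi> ! s \<in> set \<pi>" using st(1,2) by simp
  then have "a \<in> set \<pi>" using \<pi> a(1) unfolding release_set_def by auto
  then obtain u where u: "u < length \<pi>" "\<pi> ! u = a" by (metis in_set_conv_nth)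
  have "Suc s \<le> c" using nth_notin_take_imp_le[OF c(1)] z_late c(2) by blast
  moreover have "Suc t \<le> u" using nth_notin_take_imp_le[OF u(1)] a(2) u(2) by blast
  moreover have "\<pi> ! u < \<pi> ! s" using a(1) u(2) unfolding release_set_def by simp
  ultimately show "lock_obstruction \<pi>"
    using r st c u by (intro lock_obstructionI[of r s t c u]) simp_all
next
  assume "lock_obstruction \<pi>"
  then obtain r s t c u where pos: "r < s" "s < t" "s < c" "t < u" "c < length \<pi>" "u < length \<pi>"
    and val: "\<pi> ! u < \<pi> ! s" "\<pi> ! s < \<pi> ! c" "\<pi> ! c < \<pi> ! r" "\<pi> ! s < \<pi> ! t"
    unfolding lock_obstruction_def by blast
  have "forced_behind \<pi> s (\<pi> ! c)"
    using pos val distinct_nth_notin_take[OF \<open>distinct \<pi>\<close>, of "Suc s" c]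
    unfolding forced_behind_def by auto
  moreover have "\<pi> ! u \<in> release_set \<pi> s"
    using pos val \<pi> nth_mem[OF pos(6)] distinct_nth_notin_take[OF \<open>distinct \<pi>\<close>, of s u]
    unfolding release_set_def by auto
  moreover have "\<pi> ! u \<notin> set (take (Suc t) \<pi>)"
    using pos distinct_nth_notin_take[OF \<open>distinct \<pi>\<close>] by simp
  moreover have "t < length \<pi>" using pos by simp
  ultimately show "\<not> lock_consistent \<pi>"
    using pos(2) val(4) unfolding lock_consistent_def by blast
qed

lemma lock_obstruction_iff_patterns:
  assumes "distinct \<pi>"
  shows "lock_obstruction \<pi> \<longleftrightarrow>
    contains_pattern \<pi> [4,2,3,1] \<or> contains_pattern \<pi> [4,2,5,1,3]"
proof
  assume "lock_obstruction \<pi>"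
  then obtain r s t c u where pos: "r < s" "s < t" "s < c" "t < u" "c < length \<pi>" "u < length \<pi>"
    and val: "\<pi> ! u < \<pi> ! s" "\<pi> ! s < \<pi> ! c" "\<pi> ! c < \<pi> ! r" "\<pi> ! s < \<pi> ! t"
    unfolding lock_obstruction_def by blast
  have "\<pi> ! t \<noteq> \<pi> ! r" using nth_eq_iff_index_eq[OF assms] pos by simp
  moreover have "c \<noteq> u" using val by auto
  ultimately consider "\<pi> ! t < \<pi> ! r" | "\<pi> ! r < \<pi> ! t" "c < u" | "\<pi> ! r < \<pi> ! t" "u < c"
    by linarith
  then show "contains_pattern \<pi> [4,2,3,1] \<or> contains_pattern \<pi> [4,2,5,1,3]"
  proof cases
    case 1
    then have "contains_pattern \<pi> [4,2,3,1]"
      using pos val by (intro contains_4231I[of r s t u]) simp_all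
    then show ?thesis ..
  next
    case 2
    then have "contains_pattern \<pi> [4,2,3,1]"
      using pos val by (intro contains_4231I[of r s c u]) simp_all
    then show ?thesis ..
  next
    case 3
    then have "contains_pattern \<pi> [4,2,5,1,3]"
      using pos val by (intro contains_42513I[of r s t u c]) simp_all
    then show ?thesis ..
  qed
next
  assume "contains_pattern \<pi> [4,2,3,1] \<or> contains_pattern \<pi> [4,2,5,1,3]"
  then show "lock_obstruction \<pi>"
  proof
    assume "contains_pattern \<pi> [4,2,3,1]"
    then obtain i j k l where "i < j" "j < k" "k < l" "l < length \<pi>"
      "\<pi> ! l < \<pi> ! j" "\<pi> ! j < \<pi> ! k" "\<pi> ! k < \<pi> ! i"
      by (rule contains_4231E)
    then show ?thesis by (intro lock_obstructionI[of i j k k l]) simp_all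
  next
    assume "contains_pattern \<pi> [4,2,5,1,3]"
    then obtain i j k l m where "i < j" "j < k" "k < l" "l < m" "m < length \<pi>"
      "\<pi> ! l < \<pi> ! j" "\<pi> ! j < \<pi> ! m" "\<pi> ! m < \<pi> ! i" "\<pi> ! i < \<pi> ! k"
      by (rule contains_42513E)
    then show ?thesis by (intro lock_obstructionI[of i j k m l]) simp_all
  qed
qed

theorem mainTheorem3:
  fixes n :: nat and \<pi> :: "nat list"
  assumes "distinct \<pi>" and "set \<pi> = {1..n}"
  shows "sljq_output n \<pi> \<longleftrightarrow>
           (avoids_pattern \<pi> [4,2,3,1] \<and> avoids_pattern \<pi> [4,2,5,1,3])"
proof -
  have "sljq_output n \<pi> \<longleftrightarrow> lock_consistent \<pi>"
    using sljq_output_lock_consistent lock_consistent_imp_sljq_output[OF _ assms] by blast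
  also have "\<dots> \<longleftrightarrow> \<not> lock_obstruction \<pi>"
    using not_lock_consistent_iff_obstruction[OF assms] by blast
  also have "\<dots> \<longleftrightarrow> avoids_pattern \<pi> [4,2,3,1] \<and> avoids_pattern \<pi> [4,2,5,1,3]"
    using lock_obstruction_iff_patterns[OF assms(1)] unfolding avoids_pattern_def by blast
  finally show ?thesis .
qed

end
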